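(* Let $P_E$ be the set of all primitive Eisenstein triples, i.e. triples $(a,b,c) \in \mathbb{Z}^3_{\geq 0} \setminus \{(0,0,0)\}$ with $a^2 - ab + b^2 = c^2$, $a \leq b$ and $\gcd(a,b,c)=1$. Let $G_E = \langle U, M_1, M_2, M_3 \rangle$ be the non-commutative monoid generated by the matrices $$U = \begin{bmatrix} -1&1&0 \\ 0&1&0 \\ 0&0&1 \end{bmatrix},\quad M_1 = \begin{bmatrix} 3 & -4 & 4 \\ 7 & -7 & 8 \\ 6 & -6 & 7 \end{bmatrix},\quad M_2 = \begin{bmatrix} -4 & 3 & 4 \\ -7 & 7 & 8 \\ -6 & 6 & 7 \end{bmatrix},\quad M_3 = \begin{bmatrix} 1 & 3 & 4 \\ 0 & 7 & 8 \\ 0 & 6 & 7 \end{bmatrix}$$ in $\operatorname{GL}_3(\mathbb{Z})$. Then $G_E$ acts on the set $P_E$ by left multiplication: $$M(a,b,c) = M \begin{bmatrix} a \\ b \\ c \end{bmatrix} \in P_E$$ for every $M \in G_E$ and $(a,b,c) \in P_E$.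
   Context: An Eisenstein triple is a solution $(a,b,c) \in \mathbb{Z}^3_{\geq 0}\setminus\{(0,0,0)\}$ of $a^2-ab+b^2=c^2$; it is primitive if additionally $a \leq b$ and $\gcd(a,b,c)=1$. Note $U(a,b,c) = (b-a,b,c)$. *)

theory Defs
  imports "HOL-Analysis.Analysis"
begin

definition eisenstein_triple :: "int ^ 3 \<Rightarrow> bool" where
  "eisenstein_triple v \<longleftrightarrow>
     v $ 1 \<ge> 0 \<and> v $ 2 \<ge> 0 \<and> v $ 3 \<ge> 0 \<and> v \<noteq> 0 \<and>
     (v $ 1)^2 - (v $ 1) * (v $ 2) + (v $ 2)^2 = (v $ 3)^2"

definition primitive_eisenstein_triples :: "(int ^ 3) set" where
  "primitive_eisenstein_triples =
     {v. eisenstein_triple v \<and> v $ 1 \<le> v $ 2 \<and> gcd (gcd (v $ 1) (v $ 2)) (v $ 3) = 1}"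

definition U_E :: "int ^ 3 ^ 3" where
  "U_E = vector [vector [-1, 1, 0], vector [0, 1, 0], vector [0, 0, 1]]"

definition M1_E :: "int ^ 3 ^ 3" where
  "M1_E = vector [vector [3, -4, 4], vector [7, -7, 8], vector [6, -6, 7]]"

definition M2_E :: "int ^ 3 ^ 3" where
  "M2_E = vector [vector [-4, 3, 4], vector [-7, 7, 8], vector [-6, 6, 7]]"

definition M3_E :: "int ^ 3 ^ 3" where
  "M3_E = vector [vector [1, 3, 4], vector [0, 7, 8], vector [0, 6, 7]]"

inductive_set G_E :: "(int ^ 3 ^ 3) set" where
  id_in: "mat 1 \<in> G_E"
| mult_in: "A \<in> G_E \<Longrightarrow> B \<in> {U_E, M1_E, M2_E, M3_E} \<Longrightarrow> A ** B \<in> G_E"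

end

theory Submission
  imports Defs
begin

text \<open>Each generator B preserves the quadratic form \<open>a\<^sup>2 - a b + b\<^sup>2 - c\<^sup>2\<close> identically and has an
  integer inverse, so it maps Eisenstein triples to Eisenstein triples and preserves the gcd of
  the entries. It remains to see that B keeps the entries nonnegative and ordered; for \<open>U\<close> and
  \<open>M\<^sub>3\<close> this is immediate, and for \<open>M\<^sub>1\<close>, \<open>M\<^sub>2\<close> it follows from the bounds
  \<open>a \<le> c\<close>, \<open>b - a \<le> c\<close> and \<open>4 b - 3 a \<le> 4 c\<close> valid for every triple with \<open>0 \<le> a \<le> b\<close>.\<close>

lemma Gcd_components_dvd_matrix_vector_mult:
  fixes A :: "int ^ 'n ^ 'm" and v :: "int ^ 'n"
  shows "Gcd (range (($) v)) dvd Gcd (range (($) (A *v v)))"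
proof (rule Gcd_greatest, clarify)
  fix i
  have "Gcd (range (($) v)) dvd A $ i $ j * v $ j" for j
    by (simp add: Gcd_dvd)
  then show "Gcd (range (($) v)) dvd (A *v v) $ i"
    by (simp add: matrix_vector_mult_def dvd_sum)
qed

lemma Gcd_components_matrix_vector_mult_left_invertible:
  fixes B N :: "int ^ 'n ^ 'n"
  assumes "N ** B = mat 1"
  shows "Gcd (range (($) (B *v v))) = Gcd (range (($) v))"
proof (rule zdvd_antisym_nonneg)
  have "Gcd (range (($) (B *v v))) dvd Gcd (range (($) (N *v (B *v v))))"
    by (rule Gcd_components_dvd_matrix_vector_mult)
  then show "Gcd (range (($) (B *v v))) dvd Gcd (range (($) v))"
    by (simp add: matrix_vector_mul_assoc assms)
qed (simp_all add: Gcd_components_dvd_matrix_vector_mult)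

lemma Gcd_components_3: "Gcd (range (($) (v :: int ^ 3))) = gcd (gcd (v $ 1) (v $ 2)) (v $ 3)"
  by (simp add: UNIV_3 gcd.assoc)

lemma vector_3_components: "(v :: 'a::zero ^ 3) = vector [v $ 1, v $ 2, v $ 3]"
  by (simp add: vec_eq_iff forall_3)

lemma matrix_vector_mult_3:
  "(vector [vector [a11, a12, a13], vector [a21, a22, a23], vector [a31, a32, a33]] :: int ^ 3 ^ 3)
     *v vector [x, y, z]
   = vector [a11 * x + a12 * y + a13 * z, a21 * x + a22 * y + a23 * z, a31 * x + a32 * y + a33 * z]"
  by (simp add: vec_eq_iff forall_3 matrix_vector_mult_def sum_3)

lemma generators_mult_vector:
  "U_E *v vector [a, b, c] = vector [b - a, b, c]"
  "M1_E *v vector [a, b, c] = vector [3*a - 4*b + 4*c, 7*a - 7*b + 8*c, 6*a - 6*b + 7*c]"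
  "M2_E *v vector [a, b, c] = vector [-4*a + 3*b + 4*c, -7*a + 7*b + 8*c, -6*a + 6*b + 7*c]"
  "M3_E *v vector [a, b, c] = vector [a + 3*b + 4*c, 7*b + 8*c, 6*b + 7*c]"
  by (simp_all add: U_E_def M1_E_def M2_E_def M3_E_def matrix_vector_mult_3)

lemma generators_left_invertible:
  assumes "B \<in> {U_E, M1_E, M2_E, M3_E}"
  shows "\<exists>N. N ** B = mat 1"
proof -
  have "U_E ** U_E = mat 1"
    and "vector [vector [-1, 4, -4], vector [-1, -3, 4], vector [0, -6, 7]] ** M1_E = mat 1"
    and "vector [vector [-1, -3, 4], vector [-1, 4, -4], vector [0, -6, 7]] ** M2_E = mat 1"
    and "vector [vector [1, 3, -4], vector [0, 7, -8], vector [0, -6, 7]] ** M3_E = mat 1"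
    by (simp_all add: U_E_def M1_E_def M2_E_def M3_E_def
        vec_eq_iff forall_3 matrix_matrix_mult_def sum_3 mat_def)
  then show ?thesis
    using assms by blast
qed

definition ordered_eisenstein_triple :: "int \<Rightarrow> int \<Rightarrow> int \<Rightarrow> bool" where
  "ordered_eisenstein_triple a b c \<longleftrightarrow> 0 \<le> a \<and> a \<le> b \<and> 0 \<le> c \<and> a\<^sup>2 - a * b + b\<^sup>2 = c\<^sup>2"

lemma primitive_eisenstein_triples_iff:
  "v \<in> primitive_eisenstein_triples \<longleftrightarrow>
     ordered_eisenstein_triple (v $ 1) (v $ 2) (v $ 3) \<and> Gcd (range (($) v)) = 1"
proof -
  have "v \<noteq> 0" if "Gcd (range (($) v)) = 1"
    using that by auto
  then show ?thesis
    by (auto simp: primitive_eisenstein_triples_def eisenstein_triple_def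
        ordered_eisenstein_triple_def Gcd_components_3)
qed

lemma ordered_eisenstein_triple_bounds:
  assumes "ordered_eisenstein_triple a b c"
  shows "a \<le> c" "b - a \<le> c" "4*b - 3*a \<le> 4*c"
proof -
  have a: "0 \<le> a" "a \<le> b" "0 \<le> b" and c: "0 \<le> c" and eq: "a\<^sup>2 - a * b + b\<^sup>2 = c\<^sup>2"
    using assms by (auto simp: ordered_eisenstein_triple_def)
  have "c\<^sup>2 - a\<^sup>2 = b * (b - a)"
    using eq by algebra
  moreover have "0 \<le> b * (b - a)"
    using a by simp
  ultimately have "a\<^sup>2 \<le> c\<^sup>2"
    by linarith
  then show "a \<le> c"
    using c by (rule power2_le_imp_le)
  have "c\<^sup>2 - (b - a)\<^sup>2 = a * b"
    using eq by algebra
  moreover have "0 \<le> a * b"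
    using a by simp
  ultimately have "(b - a)\<^sup>2 \<le> c\<^sup>2"
    by linarith
  then show "b - a \<le> c"
    using c by (rule power2_le_imp_le)
  have "(4*c)\<^sup>2 - (4*b - 3*a)\<^sup>2 = a * (7*a + 8*b)"
    using eq by algebra
  moreover have "0 \<le> a * (7*a + 8*b)"
    using a by simp
  ultimately have "(4*b - 3*a)\<^sup>2 \<le> (4*c)\<^sup>2"
    by linarith
  then show "4*b - 3*a \<le> 4*c"
    by (rule power2_le_imp_le) (use c in simp)
qed

lemma ordered_eisenstein_triple_U:
  assumes "ordered_eisenstein_triple a b c"
  shows "ordered_eisenstein_triple (b - a) b c"
proof -
  have "(b - a)\<^sup>2 - (b - a) * b + b\<^sup>2 = c\<^sup>2 + (a\<^sup>2 - a * b + b\<^sup>2 - c\<^sup>2)"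
    by algebra
  then show ?thesis
    using assms unfolding ordered_eisenstein_triple_def by simp
qed

lemma ordered_eisenstein_triple_M1:
  assumes "ordered_eisenstein_triple a b c"
  shows "ordered_eisenstein_triple (3*a - 4*b + 4*c) (7*a - 7*b + 8*c) (6*a - 6*b + 7*c)"
proof -
  have "(3*a - 4*b + 4*c)\<^sup>2 - (3*a - 4*b + 4*c) * (7*a - 7*b + 8*c) + (7*a - 7*b + 8*c)\<^sup>2
      = (6*a - 6*b + 7*c)\<^sup>2 + (a\<^sup>2 - a * b + b\<^sup>2 - c\<^sup>2)"
    by algebra
  then show ?thesis
    using assms ordered_eisenstein_triple_bounds[OF assms] unfolding ordered_eisenstein_triple_def by simp
qed

lemma ordered_eisenstein_triple_M2:
  assumes "ordered_eisenstein_triple a b c"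
  shows "ordered_eisenstein_triple (-4*a + 3*b + 4*c) (-7*a + 7*b + 8*c) (-6*a + 6*b + 7*c)"
proof -
  have "(-4*a + 3*b + 4*c)\<^sup>2 - (-4*a + 3*b + 4*c) * (-7*a + 7*b + 8*c) + (-7*a + 7*b + 8*c)\<^sup>2
      = (-6*a + 6*b + 7*c)\<^sup>2 + (a\<^sup>2 - a * b + b\<^sup>2 - c\<^sup>2)"
    by algebra
  then show ?thesis
    using assms ordered_eisenstein_triple_bounds[OF assms] unfolding ordered_eisenstein_triple_def by simp
qed

lemma ordered_eisenstein_triple_M3:
  assumes "ordered_eisenstein_triple a b c"
  shows "ordered_eisenstein_triple (a + 3*b + 4*c) (7*b + 8*c) (6*b + 7*c)"
proof -
  have "(a + 3*b + 4*c)\<^sup>2 - (a + 3*b + 4*c) * (7*b + 8*c) + (7*b + 8*c)\<^sup>2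
      = (6*b + 7*c)\<^sup>2 + (a\<^sup>2 - a * b + b\<^sup>2 - c\<^sup>2)"
    by algebra
  then show ?thesis
    using assms unfolding ordered_eisenstein_triple_def by simp
qed

lemma generators_preserve_primitive_eisenstein_triples:
  assumes B: "B \<in> {U_E, M1_E, M2_E, M3_E}" and v: "v \<in> primitive_eisenstein_triples"
  shows "B *v v \<in> primitive_eisenstein_triples"
proof -
  obtain a b c where abc: "v = vector [a, b, c]"
    using vector_3_components by blast
  have ordered: "ordered_eisenstein_triple a b c" and coprime: "Gcd (range (($) v)) = 1"
    using v by (simp_all add: primitive_eisenstein_triples_iff abc)
  obtain N where "N ** B = mat 1"
    using generators_left_invertible[OF B] by blast
  then have "Gcd (range (($) (B *v v))) = 1"
    using coprime Gcd_components_matrix_vector_mult_left_invertible by metis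
  moreover have "ordered_eisenstein_triple ((B *v v) $ 1) ((B *v v) $ 2) ((B *v v) $ 3)"
    using B ordered ordered_eisenstein_triple_U ordered_eisenstein_triple_M1
      ordered_eisenstein_triple_M2 ordered_eisenstein_triple_M3
    by (auto simp: abc generators_mult_vector)
  ultimately show ?thesis
    by (simp add: primitive_eisenstein_triples_iff)
qed

theorem lemma6p1:
  assumes "M \<in> G_E" and "v \<in> primitive_eisenstein_triples"
  shows "M *v v \<in> primitive_eisenstein_triples"
  using assms
proof (induction M arbitrary: v rule: G_E.induct)
  case id_in
  then show ?case by simp
next
  case (mult_in A B)
  then show ?case
    by (simp add: matrix_vector_mul_assoc[symmetric] generators_preserve_primitive_eisenstein_triples)
qed

end
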